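(* The Waterfilling Mechanism (with exact bucketing) described in the context satisfies the Sharing Incentive: for every nonempty finite set $S$ of analysts (each with workload $W_l$, weight $s_l>0$ and strategy $A_l$ satisfying $W_l=W_lA_l^+A_l$ with every column of $A_l$ of $L_1$ norm $1$) and every $i\in S$, $\mathrm{Err}_i(S)\le \mathrm{Err}_i(\{i\})$, i.e. analyst $i$'s expected error when all analysts in $S$ are served jointly with total budget $(\sum_{l\in S}s_l)\varepsilon$ is at most its expected error when served alone by the same mechanism with budget $s_i\varepsilon$.
   Context: Data are a vector $x\in\mathbb{R}^n$. Fix $\varepsilon>0$. Each analyst $l$ has a workload matrix $W_l$, a weight $s_l>0$ (entitled to budget $s_l\varepsilon$), and a strategy matrix $A_l$ chosen for $W_l$ alone by a selection step, with $W_l = W_lA_l^+A_l$ ($^+$ the Moore–Penrose pseudo-inverse) and every column of $A_l$ of $L_1$ norm $1$. Fix a norm $\|\cdot\|$ on row vectors. Waterfilling Mechanism for a collective $S$: maintain buckets $B$ (unit vectors $e$ with weights $f_B(e)>0$), initially empty; for each $l\in S$ and each nonzero row $v$ of $s_lA_l$, set $e=v/\|v\|$; if $e\in B$ increase $f_B(e)$ by $\|v\|$, else add $e$ with $f_B(e)=\|v\|$. The joint strategy $A$ has rows $f_B(e)e$, $e\in B$. With $\varepsilon_S=(\sum_{l\in S}s_l)\varepsilon$, release $y=Ax+\eta$, $\eta$ i.i.d. Laplace of scale $\|A\|_1/\varepsilon_S$ ($\|A\|_1$ = maximum column $L_1$ norm). Analyst $i$ estimates $W_ix$ by $W_iA^+y$,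 with expected error $\mathrm{Err}_i(S)=\frac{2\|A\|_1^2}{\varepsilon_S^2}\|W_iA^+\|_F^2$. *)

theory Defs
  imports Complex_Main "Jordan_Normal_Form.Matrix"
begin

definition pinv :: "real mat \<Rightarrow> real mat" where
  "pinv M = (THE X. X \<in> carrier_mat (dim_col M) (dim_row M) \<and>
       M * X * M = M \<and> X * M * X = X \<and>
       transpose_mat (M * X) = M * X \<and> transpose_mat (X * M) = X * M)"

definition is_norm_on :: "nat \<Rightarrow> (real vec \<Rightarrow> real) \<Rightarrow> bool" where
  "is_norm_on n nrm \<longleftrightarrow>
     (\<forall>v \<in> carrier_vec n. 0 \<le> nrm v \<and> (nrm v = 0 \<longleftrightarrow> v = 0\<^sub>v n)) \<and>
     (\<forall>v \<in> carrier_vec n. \<forall>c. nrm (c \<cdot>\<^sub>v v) = \<bar>c\<bar> * nrm v) \<and>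
     (\<forall>u \<in> carrier_vec n. \<forall>v \<in> carrier_vec n. nrm (u + v) \<le> nrm u + nrm v)"

text \<open>L1 norm of column j; induced 1-norm = maximum column L1 norm.\<close>
definition col_l1 :: "real mat \<Rightarrow> nat \<Rightarrow> real" where
  "col_l1 M j = (\<Sum>i<dim_row M. \<bar>M $$ (i, j)\<bar>)"

definition norm1 :: "real mat \<Rightarrow> real" where
  "norm1 M = Max (insert 0 {col_l1 M j | j. j < dim_col M})"

definition frob_sq :: "real mat \<Rightarrow> real" where
  "frob_sq M = (\<Sum>i<dim_row M. \<Sum>j<dim_col M. (M $$ (i, j))\<^sup>2)"

definition wf_row :: "('a \<Rightarrow> real) \<Rightarrow> ('a \<Rightarrow> real mat) \<Rightarrow> 'a \<times> nat \<Rightarrow> real vec" where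
  "wf_row s A p = row (s (fst p) \<cdot>\<^sub>m A (fst p)) (snd p)"

definition wf_idx :: "nat \<Rightarrow> ('a \<Rightarrow> real) \<Rightarrow> ('a \<Rightarrow> real mat) \<Rightarrow> 'a set \<Rightarrow> ('a \<times> nat) set" where
  "wf_idx n s A S = {(l, j). l \<in> S \<and> j < dim_row (A l) \<and> wf_row s A (l, j) \<noteq> 0\<^sub>v n}"

definition unit_dir :: "(real vec \<Rightarrow> real) \<Rightarrow> real vec \<Rightarrow> real vec" where
  "unit_dir nrm v = (1 / nrm v) \<cdot>\<^sub>v v"

definition wf_buckets :: "nat \<Rightarrow> (real vec \<Rightarrow> real) \<Rightarrow> ('a \<Rightarrow> real) \<Rightarrow> ('a \<Rightarrow> real mat) \<Rightarrow> 'a set \<Rightarrow> real vec set" where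
  "wf_buckets n nrm s A S = (\<lambda>p. unit_dir nrm (wf_row s A p)) ` wf_idx n s A S"

definition wf_weight :: "nat \<Rightarrow> (real vec \<Rightarrow> real) \<Rightarrow> ('a \<Rightarrow> real) \<Rightarrow> ('a \<Rightarrow> real mat) \<Rightarrow> 'a set \<Rightarrow> real vec \<Rightarrow> real" where
  "wf_weight n nrm s A S e =
     (\<Sum>p \<in> {p \<in> wf_idx n s A S. unit_dir nrm (wf_row s A p) = e}. nrm (wf_row s A p))"

definition wf_strategy :: "nat \<Rightarrow> (real vec \<Rightarrow> real) \<Rightarrow> ('a \<Rightarrow> real) \<Rightarrow> ('a \<Rightarrow> real mat) \<Rightarrow> 'a set \<Rightarrow> real mat" where
  "wf_strategy n nrm s A S =
     mat_of_rows n (map (\<lambda>e. wf_weight n nrm s A S e \<cdot>\<^sub>v e)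
       (SOME xs. distinct xs \<and> set xs = wf_buckets n nrm s A S))"

definition wf_err :: "nat \<Rightarrow> (real vec \<Rightarrow> real) \<Rightarrow> real \<Rightarrow> ('a \<Rightarrow> real mat) \<Rightarrow> ('a \<Rightarrow> real) \<Rightarrow> ('a \<Rightarrow> real mat) \<Rightarrow> 'a \<Rightarrow> 'a set \<Rightarrow> real" where
  "wf_err n nrm \<epsilon> W s A i S =
     (let AS = wf_strategy n nrm s A S; \<epsilon>S = (\<Sum>l\<in>S. s l) * \<epsilon>
      in 2 * (norm1 AS)\<^sup>2 / \<epsilon>S\<^sup>2 * frob_sq (W i * pinv AS))"

end

theory Submission
  imports Defs
begin

text \<open>Write \<open>B\<^sub>T\<close> for the joint strategy of a collective \<open>T\<close>. Every row of \<open>A\<^sub>i\<close> is a multiple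
  of a row of \<open>B\<^sub>{\<^sub>i\<^sub>}\<close>, so \<open>W\<^sub>i = Z B\<^sub>{\<^sub>i\<^sub>}\<close> with \<open>Z = W\<^sub>i B\<^sub>{\<^sub>i\<^sub>}\<^sup>+\<close>. Each row \<open>f\<^sub>{\<^sub>i\<^sub>}(e) e\<close>
  of \<open>B\<^sub>{\<^sub>i\<^sub>}\<close> is the row \<open>f\<^sub>S(e) e\<close> of \<open>B\<^sub>S\<close> scaled by \<open>f\<^sub>{\<^sub>i\<^sub>}(e) / f\<^sub>S(e) \<le> 1\<close>, hence also
  \<open>W\<^sub>i = Y B\<^sub>S\<close> with \<open>\<parallel>Y\<parallel>\<^sub>F \<le> \<parallel>Z\<parallel>\<^sub>F\<close>. As \<open>W B\<^sup>+\<close> is the least Frobenius-norm solution \<open>Y'\<close>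
  of \<open>Y' B = W\<close>, this gives \<open>\<parallel>W\<^sub>i B\<^sub>S\<^sup>+\<parallel>\<^sub>F \<le> \<parallel>W\<^sub>i B\<^sub>{\<^sub>i\<^sub>}\<^sup>+\<parallel>\<^sub>F\<close>. Finally, bucketing preserves
  column \<open>L\<^sub>1\<close> norms, so \<open>\<parallel>B\<^sub>T\<parallel>\<^sub>1 = \<Sum>\<^sub>l\<^sub>\<in>\<^sub>T s\<^sub>l\<close> and the noise factor \<open>\<parallel>B\<^sub>T\<parallel>\<^sub>1\<^sup>2 / \<epsilon>\<^sub>T\<^sup>2\<close> equals
  \<open>1 / \<epsilon>\<^sup>2\<close> for both collectives.\<close>

section \<open>Orthogonal projectors and the Moore-Penrose pseudo-inverse\<close>

definition outer_prod :: "'a :: comm_semiring_0 vec \<Rightarrow> 'a vec \<Rightarrow> 'a mat" where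
  "outer_prod u v = mat (dim_vec u) (dim_vec v) (\<lambda>(i, j). u $ i * v $ j)"

lemma outer_prod_carrier [simp]: "outer_prod u v \<in> carrier_mat (dim_vec u) (dim_vec v)"
  unfolding outer_prod_def by simp

lemma transpose_outer_prod: "transpose_mat (outer_prod u v) = outer_prod v u"
  unfolding outer_prod_def by (rule eq_matI) (auto simp: mult.commute)

lemma mult_outer_prod:
  assumes "A \<in> carrier_mat m k" and "z \<in> carrier_vec k"
  shows "A * outer_prod z v = outer_prod (A *\<^sub>v z) v"
proof (rule eq_matI)
  fix i j assume "i < dim_row (outer_prod (A *\<^sub>v z) v)" "j < dim_col (outer_prod (A *\<^sub>v z) v)"
  with assms show "(A * outer_prod z v) $$ (i, j) = outer_prod (A *\<^sub>v z) v $$ (i, j)"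
    by (simp add: outer_prod_def scalar_prod_def sum_distrib_right mult.assoc)
qed (use assms in \<open>simp_all add: outer_prod_def\<close>)

lemma outer_prod_mult_vec:
  assumes "w \<in> carrier_vec (dim_vec v)"
  shows "outer_prod u v *\<^sub>v w = (v \<bullet> w) \<cdot>\<^sub>v u"
  using assms
  by (intro eq_vecI) (auto simp: outer_prod_def scalar_prod_def sum_distrib_left ac_simps)

lemma smult_mat_mult_vec:
  assumes "A \<in> carrier_mat nr nc" and "v \<in> carrier_vec nc"
  shows "(k \<cdot>\<^sub>m A) *\<^sub>v v = k \<cdot>\<^sub>v (A *\<^sub>v v)"
  using assms by (intro eq_vecI) (auto simp: smult_scalar_prod_distrib[of _ nc])

lemma transpose_smult_mat: "transpose_mat (k \<cdot>\<^sub>m A) = k \<cdot>\<^sub>m transpose_mat A"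
  by (rule eq_matI) auto

lemma symmetric_mult_vec_scalar_prod:
  fixes P :: "real mat"
  assumes "P \<in> carrier_mat m m" "transpose_mat P = P" "u \<in> carrier_vec m" "v \<in> carrier_vec m"
  shows "(P *\<^sub>v u) \<bullet> v = u \<bullet> (P *\<^sub>v v)"
  using transpose_vec_mult_scalar[OF assms(1,4,3)] assms(2) by simp

lemma symmetric_residual_orthogonal:
  fixes P :: "real mat"
  assumes "P \<in> carrier_mat m m" "transpose_mat P = P" "a \<in> carrier_vec m" "w \<in> carrier_vec m"
    and "P *\<^sub>v w = w"
  shows "(a - P *\<^sub>v a) \<bullet> w = 0"
  using assms symmetric_mult_vec_scalar_prod[OF assms(1-4)] by (simp add: minus_scalar_prod_distrib)

definition col_projector :: "real mat \<Rightarrow> real mat \<Rightarrow> bool" where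
  "col_projector A P \<longleftrightarrow> P \<in> carrier_mat (dim_row A) (dim_row A) \<and> transpose_mat P = P \<and>
     P * A = A \<and> (\<exists>Y \<in> carrier_mat (dim_col A) (dim_row A). P = A * Y)"

lemma col_projectorI:
  assumes "A \<in> carrier_mat m k" "P \<in> carrier_mat m m" "transpose_mat P = P" "P * A = A"
    and "Y \<in> carrier_mat k m" "P = A * Y"
  shows "col_projector A P"
proof -
  have "dim_row A = m" "dim_col A = k" using assms(1) by auto
  moreover have "\<exists>Y' \<in> carrier_mat k m. P = A * Y'" using assms(5,6) by blast
  ultimately show ?thesis unfolding col_projector_def using assms(2-4) by simp
qed

lemma col_projectorD:
  assumes "col_projector A P"
  shows "P \<in> carrier_mat (dim_row A) (dim_row A)" "transpose_mat P = P" "P * A = A"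
  using assms unfolding col_projector_def by simp_all

lemma col_projector_idem:
  assumes "col_projector A P"
  shows "P * P = P"
proof -
  obtain Y where Y: "Y \<in> carrier_mat (dim_col A) (dim_row A)" and PY: "P = A * Y"
    using assms unfolding col_projector_def by blast
  have Ac: "A \<in> carrier_mat (dim_row A) (dim_col A)" by simp
  note Pc = col_projectorD(1)[OF assms] and PA = col_projectorD(3)[OF assms]
  have "P * P = P * (A * Y)" by (simp only: PY[symmetric])
  also have "\<dots> = (P * A) * Y" by (rule assoc_mult_mat[OF Pc Ac Y, symmetric])
  also have "\<dots> = P" by (simp only: PA PY[symmetric])
  finally show ?thesis .
qed

text \<open>Adding the normalised rank-one projector onto the residual \<open>c = a - P' a\<close> extends the
  range of an orthogonal projector \<open>P'\<close> by \<open>a\<close> (one Gram-Schmidt step).\<close>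
lemma residual_projector_update:
  fixes P' :: "real mat"
  assumes P': "P' \<in> carrier_mat m m" and P'T: "transpose_mat P' = P'" and P'P': "P' * P' = P'"
    and a: "a \<in> carrier_vec m" and c_def: "c = a - P' *\<^sub>v a" and c0: "c \<noteq> 0\<^sub>v m"
    and P_def: "P = P' + (1 / (c \<bullet> c)) \<cdot>\<^sub>m outer_prod c c"
  shows "P \<in> carrier_mat m m" and "transpose_mat P = P" and "P *\<^sub>v a = a"
    and "\<And>w. w \<in> carrier_vec m \<Longrightarrow> P' *\<^sub>v w = w \<Longrightarrow> P *\<^sub>v w = w"
proof -
  define g where "g = c \<bullet> c"
  have c: "c \<in> carrier_vec m" using a P' by (simp add: c_def)
  have g: "g > 0" using conjugate_square_greater_0_vec[OF c] c0 by (simp add: g_def)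
  have cc: "outer_prod c c \<in> carrier_mat m m" using c by (metis carrier_vecD outer_prod_carrier)
  show "P \<in> carrier_mat m m" using P' cc by (simp add: P_def)
  show "transpose_mat P = P"
    using P' cc P'T by (simp add: P_def transpose_add transpose_smult_mat transpose_outer_prod)
  have P_mult: "P *\<^sub>v w = P' *\<^sub>v w + ((c \<bullet> w) / g) \<cdot>\<^sub>v c" if "w \<in> carrier_vec m" for w
    using that P' c cc
    by (simp add: P_def g_def add_mult_distrib_mat_vec smult_mat_mult_vec outer_prod_mult_vec smult_smult_assoc)
  have c_orth: "c \<bullet> w = 0" if "w \<in> carrier_vec m" "P' *\<^sub>v w = w" for w
    unfolding c_def by (rule symmetric_residual_orthogonal[OF P' P'T a that])
  have "P' *\<^sub>v (P' *\<^sub>v a) = P' *\<^sub>v a" using P'P' P' a by (metis assoc_mult_mat_vec)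
  then have "c \<bullet> (P' *\<^sub>v a) = 0" using c_orth P' a by simp
  moreover have "c \<bullet> a = c \<bullet> (c + P' *\<^sub>v a)"
    using a P' by (intro arg_cong[where f = "scalar_prod c"] eq_vecI) (auto simp: c_def)
  ultimately have "c \<bullet> a = g" using c a P' by (simp add: scalar_prod_add_distrib g_def)
  then show "P *\<^sub>v a = a"
    using P_mult[OF a] g a P' by (intro eq_vecI) (auto simp: c_def)
  show "P *\<^sub>v w = w" if "w \<in> carrier_vec m" "P' *\<^sub>v w = w" for w
    using P_mult[OF that(1)] c_orth[OF that] that c by (intro eq_vecI) auto
qed

text \<open>In the induction below \<open>A * S\<close> is \<open>A\<close> without its first column \<open>a = A z\<^sub>0\<close>.\<close>
lemma col_projector_extend:
  assumes A: "A \<in> carrier_mat m k" and S: "S \<in> carrier_mat k k'"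
    and P': "col_projector (A * S) P'"
    and z0: "z0 \<in> carrier_vec k"
    and cols: "\<And>j. j < k \<Longrightarrow> col A j = A *\<^sub>v z0 \<or> P' *\<^sub>v col A j = col A j"
  shows "\<exists>P. col_projector A P"
proof -
  define a where "a = A *\<^sub>v z0"
  obtain Y' where Y': "Y' \<in> carrier_mat k' m" and P'Y': "P' = A * (S * Y')"
    using P' A S unfolding col_projector_def by auto
  have P'c: "P' \<in> carrier_mat m m" and P'T: "transpose_mat P' = P'"
    using col_projectorD[OF P'] A by auto
  have a: "a \<in> carrier_vec m" using A z0 by (simp add: a_def)
  define z where "z = z0 - S *\<^sub>v (Y' *\<^sub>v a)"
  define c where "c = a - P' *\<^sub>v a"
  have z: "z \<in> carrier_vec k" using z0 S Y' a by (simp add: z_def)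
  have c: "c \<in> carrier_vec m" using a P'c by (simp add: c_def)
  have SY': "S * Y' \<in> carrier_mat k m" using S Y' by simp
  have "P' *\<^sub>v a = A *\<^sub>v (S *\<^sub>v (Y' *\<^sub>v a))"
    unfolding P'Y' using assoc_mult_mat_vec[OF A SY' a] assoc_mult_mat_vec[OF S Y' a] by simp
  then have Az: "A *\<^sub>v z = c"
    using A S Y' z0 a by (simp add: z_def c_def a_def mult_minus_distrib_mat_vec)
  show ?thesis
  proof (cases "c = 0\<^sub>v m")
    case True
    have "P' *\<^sub>v a = a"
    proof (rule eq_vecI)
      fix i assume i: "i < dim_vec a"
      then have "c $ i = 0" using True a by simp
      then show "(P' *\<^sub>v a) $ i = a $ i" using i a P'c by (simp add: c_def)
    qed (use a P'c in simp)
    then have "P' *\<^sub>v col A j = col A j" if "j < k" for j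
      using cols[OF that] unfolding a_def by auto
    then have "P' * A = A"
      using P'c A by (intro mat_col_eqI) (auto simp del: col_mult)
    then show ?thesis
      using col_projectorI[OF A P'c P'T _ SY' P'Y'] by blast
  next
    case False
    define P where "P = P' + (1 / (c \<bullet> c)) \<cdot>\<^sub>m outer_prod c c"
    note P = residual_projector_update[OF P'c P'T col_projector_idem[OF P'] a c_def False P_def]
    have "P *\<^sub>v col A j = col A j" if "j < k" for j
      using cols[OF that] P(3,4) A that unfolding a_def by auto
    then have PA: "P * A = A"
      using P(1) A by (intro mat_col_eqI) (auto simp del: col_mult)
    define Y where "Y = S * Y' + (1 / (c \<bullet> c)) \<cdot>\<^sub>m outer_prod z c"
    have zc: "outer_prod z c \<in> carrier_mat k m" using z c by (metis carrier_vecD outer_prod_carrier)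
    have Y: "Y \<in> carrier_mat k m" using SY' zc by (simp add: Y_def)
    have "A * Y = A * (S * Y') + (1 / (c \<bullet> c)) \<cdot>\<^sub>m (A * outer_prod z c)"
      unfolding Y_def using A SY' zc by (simp add: mult_add_distrib_mat mult_smult_distrib)
    also have "\<dots> = P"
      unfolding P_def P'Y' mult_outer_prod[OF A z] Az ..
    finally show ?thesis
      using col_projectorI[OF A P(1) P(2) PA Y] by auto
  qed
qed

lemma col_projector_exists: "\<exists>P. col_projector A P"
proof (induction "dim_col A" arbitrary: A)
  case 0
  define m where "m = dim_row A"
  have A: "A \<in> carrier_mat m 0" using 0 m_def by (metis carrier_matI)
  have PA: "0\<^sub>m m m * A = A" using A by (intro eq_matI) auto
  have PY: "0\<^sub>m m m = A * 0\<^sub>m 0 m" using A by (intro eq_matI) (auto simp: scalar_prod_def)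
  have "col_projector A (0\<^sub>m m m)"
    by (rule col_projectorI[OF A zero_carrier_mat _ PA zero_carrier_mat PY]) simp
  then show ?case ..
next
  case (Suc n)
  define m where "m = dim_row A"
  have A: "A \<in> carrier_mat m (Suc n)" using Suc.hyps(2) m_def by (metis carrier_matI)
  define S :: "real mat" where "S = mat (Suc n) n (\<lambda>(i, j). if i = Suc j then 1 else 0)"
  have S: "S \<in> carrier_mat (Suc n) n" by (simp add: S_def)
  have col_AS: "col (A * S) j = col A (Suc j)" if "j < n" for j
    using A S that
    by (intro eq_vecI) (auto simp: S_def scalar_prod_def if_distrib[of "(*) _"] cong: if_cong)
  obtain P' where P': "col_projector (A * S) P'"
    using Suc.hyps(1)[of "A * S"] S by auto
  have "col A j = A *\<^sub>v unit_vec (Suc n) 0 \<or> P' *\<^sub>v col A j = col A j" if "j < Suc n" for j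
  proof (cases j)
    case 0
    then show ?thesis
      using A by (intro disjI1 eq_vecI) auto
  next
    case (Suc j')
    then have "P' *\<^sub>v col (A * S) j' = col (A * S) j'"
      using col_projectorD[OF P'] A S that col_mult2[of P' m m "A * S" n j'] by auto
    then show ?thesis using col_AS Suc that by auto
  qed
  then show ?case
    by (rule col_projector_extend[OF A S P' unit_vec_carrier])
qed

lemma assoc_mult_mat4:
  fixes A :: "'a :: semiring_0 mat"
  assumes "A \<in> carrier_mat n1 n2" "B \<in> carrier_mat n2 n3" "C \<in> carrier_mat n3 n4" "D \<in> carrier_mat n4 n5"
  shows "A * B * C * D = A * (B * C * D)"
proof -
  have "A * B * C = A * (B * C)" using assms by simp
  hence "A * B * C * D = A * (B * C) * D" by simp
  also have "\<dots> = A * (B * C * D)"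
    using assoc_mult_mat[of A n1 n2 "B * C" n4 D n5] assms by simp
  finally show ?thesis .
qed

definition penrose_inverse :: "real mat \<Rightarrow> real mat \<Rightarrow> bool" where
  "penrose_inverse M X \<longleftrightarrow> X \<in> carrier_mat (dim_col M) (dim_row M) \<and>
     M * X * M = M \<and> X * M * X = X \<and> transpose_mat (M * X) = M * X \<and> transpose_mat (X * M) = X * M"

lemma col_projector_transpose:
  assumes R: "col_projector (transpose_mat A) R"
  shows "A * R = A" and "\<exists>Z \<in> carrier_mat (dim_row A) (dim_col A). R = transpose_mat Z * A"
proof -
  have AT: "transpose_mat A \<in> carrier_mat (dim_col A) (dim_row A)" by simp
  obtain Z where Z: "Z \<in> carrier_mat (dim_row A) (dim_col A)" and RZ: "R = transpose_mat A * Z"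
    using R unfolding col_projector_def index_transpose_mat by blast
  have Rc: "R \<in> carrier_mat (dim_col A) (dim_col A)" and RT: "transpose_mat R = R"
    and RA: "R * transpose_mat A = transpose_mat A"
    using col_projectorD[OF R] unfolding index_transpose_mat by blast+
  have "A * R = transpose_mat (R * transpose_mat A)"
    unfolding transpose_mult[OF Rc AT] RT transpose_transpose ..
  then show "A * R = A" unfolding RA transpose_transpose .
  have "R = transpose_mat (transpose_mat A * Z)" unfolding RZ[symmetric] RT ..
  then have "R = transpose_mat Z * A" unfolding transpose_mult[OF AT Z] transpose_transpose .
  with Z show "\<exists>Z \<in> carrier_mat (dim_row A) (dim_col A). R = transpose_mat Z * A" by blast
qed

text \<open>With \<open>P\<close> projecting onto the column space and \<open>R\<close> onto the row space of \<open>A\<close>,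
  \<open>X = R Y P\<close> satisfies \<open>A X = P\<close> and \<open>X A = R\<close>.\<close>
lemma penrose_inverse_exists: "\<exists>X. penrose_inverse A X"
proof -
  define m where "m = dim_row A"
  define n where "n = dim_col A"
  have A: "A \<in> carrier_mat m n" unfolding m_def n_def by (rule carrier_matI) (rule refl)+
  obtain P where P: "col_projector A P" using col_projector_exists by blast
  then obtain Y where Y: "Y \<in> carrier_mat n m" and PY: "P = A * Y"
    unfolding col_projector_def m_def n_def by blast
  have Pc: "P \<in> carrier_mat m m" and PT: "transpose_mat P = P" and PA: "P * A = A"
    using col_projectorD[OF P] unfolding m_def by blast+
  obtain R where R: "col_projector (transpose_mat A) R" using col_projector_exists by blast
  obtain Z where Z: "Z \<in> carrier_mat m n" and RZ: "R = transpose_mat Z * A"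
    using col_projector_transpose(2)[OF R] unfolding m_def n_def by blast
  have Rc: "R \<in> carrier_mat n n" and RT: "transpose_mat R = R"
    using col_projectorD[OF R] unfolding n_def index_transpose_mat by blast+
  define X where "X = R * Y * P"
  have X: "X \<in> carrier_mat n m" unfolding X_def using Rc Y Pc by simp
  have "A * X = (A * R) * Y * P" unfolding X_def by (simp only: assoc_mult_mat4[OF A Rc Y Pc])
  then have AX: "A * X = P"
    unfolding col_projector_transpose(1)[OF R] PY[symmetric] col_projector_idem[OF P] .
  have "X * A = R * Y * (P * A)"
    unfolding X_def using assoc_mult_mat[OF _ Pc A, of "R * Y" n] Rc Y by simp
  also have "\<dots> = transpose_mat Z * (A * Y * A)" unfolding PA RZ
    by (rule assoc_mult_mat4[OF _ A Y A]) (use Z in simp)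
  also have "\<dots> = R" unfolding PY[symmetric] PA RZ ..
  finally have XA: "X * A = R" .
  have "R * X = (R * R) * Y * P"
    unfolding X_def by (rule assoc_mult_mat4[OF Rc Rc Y Pc, symmetric])
  then have RX: "R * X = X" unfolding col_projector_idem[OF R] X_def .
  have "penrose_inverse A X"
    unfolding penrose_inverse_def AX XA RX PA PT RT using X by (simp add: m_def n_def)
  then show ?thesis ..
qed

lemma penrose_inverse_absorb_left:
  fixes A :: "real mat"
  assumes A: "A \<in> carrier_mat m n" and X: "penrose_inverse A X" and X': "penrose_inverse A X'"
  shows "X = X * A * X'"
proof -
  have Xc: "X \<in> carrier_mat n m" and Xc': "X' \<in> carrier_mat n m"
    using X X' A unfolding penrose_inverse_def by auto
  have AT: "transpose_mat A \<in> carrier_mat n m" and XT: "transpose_mat X \<in> carrier_mat m n"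
    using A Xc by auto
  have XXT: "X * transpose_mat X \<in> carrier_mat n n" using Xc XT by simp
  note p = X[unfolded penrose_inverse_def] X'[unfolded penrose_inverse_def]
  have AAX: "transpose_mat A = transpose_mat A * A * X'"
  proof -
    have "transpose_mat A = transpose_mat (A * X' * A)" using p by simp
    also have "\<dots> = transpose_mat A * transpose_mat (A * X')"
      using transpose_mult[of "A * X'" m m A n] A Xc' by simp
    also have "\<dots> = transpose_mat A * (A * X')" using p by simp
    finally show ?thesis using AT A Xc' by simp
  qed
  have XXA: "X = X * transpose_mat X * transpose_mat A"
  proof -
    have "X = X * (A * X)" using p A Xc by (simp add: assoc_mult_mat[of X n m A n X m])
    also have "\<dots> = X * transpose_mat (A * X)" using p by simp
    also have "\<dots> = X * (transpose_mat X * transpose_mat A)" using transpose_mult[OF A Xc] by simp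
    finally show ?thesis using Xc XT AT by simp
  qed
  have "X = X * transpose_mat X * (transpose_mat A * (A * X'))" using XXA AAX AT A Xc' by simp
  also have "\<dots> = (X * transpose_mat X * transpose_mat A) * A * X'"
    using assoc_mult_mat[OF XXT AT, of "A * X'" m]
      assoc_mult_mat[of "X * transpose_mat X * transpose_mat A" n m A n X' m] XXT AT A Xc'
    by simp
  also have "\<dots> = X * A * X'" using XXA by simp
  finally show ?thesis .
qed

lemma penrose_inverse_absorb_right:
  fixes A :: "real mat"
  assumes A: "A \<in> carrier_mat m n" and X: "penrose_inverse A X" and X': "penrose_inverse A X'"
  shows "X' = X * A * X'"
proof -
  have Xc: "X \<in> carrier_mat n m" and Xc': "X' \<in> carrier_mat n m"
    using X X' A unfolding penrose_inverse_def by auto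
  have AT: "transpose_mat A \<in> carrier_mat n m" and XT': "transpose_mat X' \<in> carrier_mat m n"
    using A Xc' by auto
  note p = X[unfolded penrose_inverse_def] X'[unfolded penrose_inverse_def]
  have AXA: "transpose_mat A = X * A * transpose_mat A"
  proof -
    have "transpose_mat A = transpose_mat (A * X * A)" using p by simp
    also have "\<dots> = transpose_mat (X * A) * transpose_mat A"
      using transpose_mult[of A m n "X * A" n] A Xc by (simp add: assoc_mult_mat[of A m n X m A n])
    also have "\<dots> = X * A * transpose_mat A" using p by simp
    finally show ?thesis .
  qed
  have XAX': "X' = transpose_mat A * transpose_mat X' * X'"
  proof -
    have "X' = (X' * A) * X'" using p by simp
    also have "\<dots> = transpose_mat (X' * A) * X'" using p by simp
    also have "\<dots> = (transpose_mat A * transpose_mat X') * X'" using transpose_mult[OF Xc' A] by simp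
    finally show ?thesis .
  qed
  have "X' = (X * A * transpose_mat A) * transpose_mat X' * X'" using XAX' AXA by simp
  also have "\<dots> = X * A * (transpose_mat A * transpose_mat X' * X')"
    by (rule assoc_mult_mat4[of "X * A" n n]) (use Xc XT' AT A Xc' in auto)
  also have "\<dots> = X * A * X'" using XAX' by simp
  finally show ?thesis .
qed

lemma penrose_inverse_unique:
  fixes A :: "real mat"
  assumes "A \<in> carrier_mat m n" and "penrose_inverse A X" and "penrose_inverse A X'"
  shows "X = X'"
  using penrose_inverse_absorb_left[OF assms] penrose_inverse_absorb_right[OF assms] by simp

lemma pinv_penrose_inverse: "penrose_inverse A (pinv A)"
proof -
  have A: "A \<in> carrier_mat (dim_row A) (dim_col A)" by simp
  obtain X where X: "penrose_inverse A X" using penrose_inverse_exists by blast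
  have "penrose_inverse A (THE X. penrose_inverse A X)"
    by (rule theI[of "penrose_inverse A" X]) (use X penrose_inverse_unique[OF A] in auto)
  then show ?thesis unfolding pinv_def penrose_inverse_def[abs_def] by simp
qed

lemma pinv_carrier: "pinv A \<in> carrier_mat (dim_col A) (dim_row A)"
  using pinv_penrose_inverse[of A] unfolding penrose_inverse_def by simp

lemma mult_pinv_mult: "A * pinv A * A = A"
  using pinv_penrose_inverse[of A] unfolding penrose_inverse_def by simp

lemma transpose_mult_pinv: "transpose_mat (A * pinv A) = A * pinv A"
  using pinv_penrose_inverse[of A] unfolding penrose_inverse_def by simp

section \<open>Frobenius-norm bounds for factorisations\<close>

lemma frob_sq_eq_sum_rows: "frob_sq M = (\<Sum>i<dim_row M. row M i \<bullet> row M i)"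
  unfolding frob_sq_def scalar_prod_def
  by (auto simp: power2_eq_square atLeast0LessThan intro!: sum.cong)

lemma row_mult_symmetric:
  fixes Y P :: "'a :: comm_semiring_0 mat"
  assumes Y: "Y \<in> carrier_mat k m" and P: "P \<in> carrier_mat m m" and PT: "transpose_mat P = P"
    and i: "i < k"
  shows "row (Y * P) i = P *\<^sub>v row Y i"
proof (rule eq_vecI)
  fix j assume "j < dim_vec (P *\<^sub>v row Y i)"
  then have j: "j < m" using P by simp
  have "col P j = row P j" using PT P j by (metis carrier_matD(2) row_transpose)
  then show "row (Y * P) i $ j = (P *\<^sub>v row Y i) $ j"
    using Y P i j comm_scalar_prod[of "row Y i" m "row P j"] by simp
qed (use Y P in simp)

lemma symmetric_idem_scalar_prod_le:
  fixes P :: "real mat"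
  assumes P: "P \<in> carrier_mat m m" and PT: "transpose_mat P = P" and PP: "P * P = P"
    and y: "y \<in> carrier_vec m"
  shows "(P *\<^sub>v y) \<bullet> (P *\<^sub>v y) \<le> y \<bullet> y"
proof -
  define u where "u = P *\<^sub>v y"
  have u: "u \<in> carrier_vec m" unfolding u_def using P y by simp
  have "u \<bullet> u = y \<bullet> (P *\<^sub>v u)"
    unfolding u_def by (rule symmetric_mult_vec_scalar_prod[OF P PT y]) (use P y in simp)
  also have "P *\<^sub>v u = u" unfolding u_def using assoc_mult_mat_vec[OF P P y] PP by simp
  finally have uu: "u \<bullet> u = y \<bullet> u" .
  have "0 \<le> (y - u) \<bullet> (y - u)"
    using conjugate_square_ge_0_vec[of "y - u"] by simp
  also have "\<dots> = y \<bullet> y - u \<bullet> y - (y \<bullet> u - u \<bullet> u)"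
    using y u by (simp add: minus_scalar_prod_distrib scalar_prod_minus_distrib)
  finally show ?thesis using uu comm_scalar_prod[OF u y] unfolding u_def by simp
qed

lemma frob_sq_mult_projector_le:
  fixes P Y :: "real mat"
  assumes P: "P \<in> carrier_mat m m" and PT: "transpose_mat P = P" and PP: "P * P = P"
    and Y: "Y \<in> carrier_mat k m"
  shows "frob_sq (Y * P) \<le> frob_sq Y"
proof -
  have "frob_sq (Y * P) = (\<Sum>i<k. (P *\<^sub>v row Y i) \<bullet> (P *\<^sub>v row Y i))"
    unfolding frob_sq_eq_sum_rows using Y P row_mult_symmetric[OF Y P PT] by simp
  also have "\<dots> \<le> (\<Sum>i<k. row Y i \<bullet> row Y i)"
    by (intro sum_mono symmetric_idem_scalar_prod_le[OF P PT PP]) (use Y in simp)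
  also have "\<dots> = frob_sq Y" unfolding frob_sq_eq_sum_rows using Y by simp
  finally show ?thesis .
qed

text \<open>\<open>W A\<^sup>+\<close> is the least-norm solution \<open>Y'\<close> of \<open>Y' A = W\<close>, where \<open>W = Y A\<close>.\<close>
lemma frob_sq_mult_pinv_le:
  fixes A Y :: "real mat"
  assumes A: "A \<in> carrier_mat m n" and Y: "Y \<in> carrier_mat k m"
  shows "frob_sq (Y * A * pinv A) \<le> frob_sq Y"
proof -
  define P where "P = A * pinv A"
  have X: "pinv A \<in> carrier_mat n m" using pinv_carrier[of A] A by simp
  have P: "P \<in> carrier_mat m m" unfolding P_def using A X by simp
  have "P * P = (A * pinv A * A) * pinv A"
    unfolding P_def using assoc_mult_mat[OF _ A X, of "A * pinv A" m] A X by simp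
  then have PP: "P * P = P" unfolding mult_pinv_mult P_def .
  have "Y * A * pinv A = Y * P" unfolding P_def using Y A X by simp
  also have "frob_sq \<dots> \<le> frob_sq Y"
    by (rule frob_sq_mult_projector_le[OF P _ PP Y]) (simp add: P_def transpose_mult_pinv)
  finally show ?thesis .
qed

lemma mult_pinv_mult_right:
  fixes A Z :: "real mat"
  assumes A: "A \<in> carrier_mat m n" and Z: "Z \<in> carrier_mat k m"
  shows "Z * A * pinv A * A = Z * A"
proof -
  have X: "pinv A \<in> carrier_mat n m" using pinv_carrier[of A] A by simp
  show ?thesis unfolding assoc_mult_mat4[OF Z A X A] mult_pinv_mult ..
qed

lemma factor_through_row_multiples:
  fixes A B :: "'a :: comm_semiring_1 mat"
  assumes A: "A \<in> carrier_mat r n" and B: "B \<in> carrier_mat k n"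
    and rows: "\<And>j. j < r \<Longrightarrow> row A j = 0\<^sub>v n \<or> (\<exists>l < k. \<exists>a. row A j = a \<cdot>\<^sub>v row B l)"
  shows "\<exists>T \<in> carrier_mat r k. A = T * B"
proof -
  obtain \<kappa> a where \<kappa>: "\<And>j. j < r \<Longrightarrow> row A j \<noteq> 0\<^sub>v n \<Longrightarrow> \<kappa> j < k \<and> row A j = a j \<cdot>\<^sub>v row B (\<kappa> j)"
    using rows by metis
  define T where "T = mat r k (\<lambda>(j, l). if row A j \<noteq> 0\<^sub>v n \<and> l = \<kappa> j then a j else 0)"
  have T: "T \<in> carrier_mat r k" by (simp add: T_def)
  have "A = T * B"
  proof (rule eq_matI)
    fix j i assume j: "j < dim_row (T * B)" and i: "i < dim_col (T * B)"
    then have j: "j < r" and i: "i < n" using T B by auto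
    have "(T * B) $$ (j, i) = (\<Sum>l<k. T $$ (j, l) * B $$ (l, i))"
      using T B j i by (simp add: scalar_prod_def lessThan_atLeast0)
    also have "\<dots> = (if row A j \<noteq> 0\<^sub>v n then a j * B $$ (\<kappa> j, i) else 0)"
      using j \<kappa>[OF j] by (simp add: T_def if_distrib[of "\<lambda>x. x * _"] cong: if_cong)
    also have "\<dots> = row A j $ i"
      using \<kappa>[OF j] B i by auto
    also have "\<dots> = A $$ (j, i)" using A j i by simp
    finally show "A $$ (j, i) = (T * B) $$ (j, i)" ..
  qed (use A B T in auto)
  with T show ?thesis by blast
qed

lemma sum_square_scatter:
  fixes x :: "nat \<Rightarrow> real" and \<sigma> :: "nat \<Rightarrow> nat"
  assumes inj: "inj_on \<sigma> {..<k}" and range: "\<And>j. j < k \<Longrightarrow> \<sigma> j < m"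
  shows "(\<Sum>c<m. (\<Sum>j<k. if c = \<sigma> j then x j else 0)\<^sup>2) = (\<Sum>j<k. (x j)\<^sup>2)"
proof -
  define F where "F c = (\<Sum>j<k. if c = \<sigma> j then x j else 0)" for c
  have F_\<sigma>: "F (\<sigma> j) = x j" if "j < k" for j
  proof -
    have "F (\<sigma> j) = (\<Sum>j'<k. if j' = j then x j' else 0)"
      unfolding F_def using inj that by (intro sum.cong refl) (auto dest: inj_onD)
    then show ?thesis using that by simp
  qed
  have "(\<Sum>c<m. (F c)\<^sup>2) = (\<Sum>c \<in> \<sigma> ` {..<k}. (F c)\<^sup>2)"
  proof (rule sum.mono_neutral_right)
    show "\<forall>c \<in> {..<m} - \<sigma> ` {..<k}. (F c)\<^sup>2 = 0" by (auto simp: F_def intro!: sum.neutral)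
  qed (use range in auto)
  also have "\<dots> = (\<Sum>j<k. (F (\<sigma> j))\<^sup>2)" by (rule sum.reindex[OF inj, unfolded comp_def])
  also have "\<dots> = (\<Sum>j<k. (x j)\<^sup>2)" using F_\<sigma> by simp
  finally show ?thesis unfolding F_def .
qed

lemma scaled_rows_factor_frob_le:
  fixes A B Z :: "real mat" and \<sigma> :: "nat \<Rightarrow> nat"
  assumes A: "A \<in> carrier_mat m n" and B: "B \<in> carrier_mat k n" and Z: "Z \<in> carrier_mat r k"
    and inj: "inj_on \<sigma> {..<k}" and range: "\<And>j. j < k \<Longrightarrow> \<sigma> j < m"
    and scale: "\<And>j. j < k \<Longrightarrow> \<bar>t j\<bar> \<le> 1" and rows: "\<And>j. j < k \<Longrightarrow> row B j = t j \<cdot>\<^sub>v row A (\<sigma> j)"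
  shows "\<exists>Y \<in> carrier_mat r m. Y * A = Z * B \<and> frob_sq Y \<le> frob_sq Z"
proof -
  define E where "E = mat k m (\<lambda>(j, c). if c = \<sigma> j then t j else 0)"
  have E: "E \<in> carrier_mat k m" by (simp add: E_def)
  have "E * A = B"
  proof (rule eq_matI)
    fix j i assume "j < dim_row B" "i < dim_col B"
    then have j: "j < k" and i: "i < n" using B by auto
    have "(E * A) $$ (j, i) = (\<Sum>c<m. (if c = \<sigma> j then t j else 0) * A $$ (c, i))"
      using E A j i by (simp add: scalar_prod_def lessThan_atLeast0 E_def)
    also have "\<dots> = t j * A $$ (\<sigma> j, i)"
      using range[OF j] by (simp add: if_distrib[of "\<lambda>x. x * _"] cong: if_cong)
    also have "\<dots> = B $$ (j, i)"
      using rows[OF j] A B j i range[OF j] by (metis carrier_matD index_row index_smult_vec)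
    finally show "(E * A) $$ (j, i) = B $$ (j, i)" .
  qed (use E A B in auto)
  then have ZEA: "(Z * E) * A = Z * B" using Z E A by simp
  have "frob_sq (Z * E) = (\<Sum>q<r. \<Sum>c<m. (\<Sum>j<k. if c = \<sigma> j then Z $$ (q, j) * t j else 0)\<^sup>2)"
    unfolding frob_sq_def using Z E
    by (intro sum.cong refl)
      (auto simp: E_def scalar_prod_def lessThan_atLeast0 if_distrib[of "(*) _"] cong: if_cong)
  also have "\<dots> = (\<Sum>q<r. \<Sum>j<k. (Z $$ (q, j))\<^sup>2 * (t j)\<^sup>2)"
    by (simp add: sum_square_scatter[OF inj range] power_mult_distrib)
  also have "\<dots> \<le> (\<Sum>q<r. \<Sum>j<k. (Z $$ (q, j))\<^sup>2)"
    using scale by (intro sum_mono mult_left_le) (auto simp: abs_square_le_1)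
  also have "\<dots> = frob_sq Z" unfolding frob_sq_def using Z by simp
  finally have "frob_sq (Z * E) \<le> frob_sq Z" .
  with ZEA show ?thesis using Z E by (intro bexI[of _ "Z * E"]) auto
qed

section \<open>The waterfilling strategy\<close>

lemma norm1_eq_const:
  assumes "0 < dim_col M" and "0 \<le> a" and "\<And>j. j < dim_col M \<Longrightarrow> col_l1 M j = a"
  shows "norm1 M = a"
proof -
  have "{col_l1 M j | j. j < dim_col M} = {a}" using assms by auto
  then show ?thesis unfolding norm1_def using assms(2) by simp
qed

lemma sum_nth_distinct: "distinct xs \<Longrightarrow> (\<Sum>k<length xs. g (xs ! k)) = sum g (set xs)"
  by (simp add: sum.distinct_set_conv_list sum.list_conv_set_nth atLeast0LessThan)

lemma unit_dir_carrier: "v \<in> carrier_vec n \<Longrightarrow> unit_dir nrm v \<in> carrier_vec n"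
  unfolding unit_dir_def by simp

lemma smult_unit_dir: "nrm v \<noteq> 0 \<Longrightarrow> nrm v \<cdot>\<^sub>v unit_dir nrm v = v"
  unfolding unit_dir_def by (simp add: smult_smult_assoc)

lemma wf_idx_mono: "T \<subseteq> T' \<Longrightarrow> wf_idx n s A T \<subseteq> wf_idx n s A T'"
  unfolding wf_idx_def by auto

locale waterfilling =
  fixes n :: nat and nrm :: "real vec \<Rightarrow> real" and s :: "'a \<Rightarrow> real" and A :: "'a \<Rightarrow> real mat"
    and S :: "'a set"
  assumes norm: "is_norm_on n nrm" and finite_S: "finite S" and s_pos: "\<And>l. l \<in> S \<Longrightarrow> s l > 0"
    and dim_col_A: "\<And>l. l \<in> S \<Longrightarrow> dim_col (A l) = n"
begin

lemma wf_row_carrier: "l \<in> S \<Longrightarrow> wf_row s A (l, j) \<in> carrier_vec n"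
  using dim_col_A unfolding wf_row_def by (auto simp: row_def)

lemma wf_row_index:
  "l \<in> S \<Longrightarrow> j < dim_row (A l) \<Longrightarrow> c < n \<Longrightarrow> wf_row s A (l, j) $ c = s l * A l $$ (j, c)"
  using dim_col_A unfolding wf_row_def by simp

lemma wf_idx_subset: "wf_idx n s A T \<subseteq> Sigma T (\<lambda>l. {..<dim_row (A l)})"
  unfolding wf_idx_def by auto

lemma finite_wf_idx: "T \<subseteq> S \<Longrightarrow> finite (wf_idx n s A T)"
  using finite_subset[OF wf_idx_subset] finite_subset[of T S] finite_S by blast

lemma wf_idx_row:
  assumes "T \<subseteq> S" and "p \<in> wf_idx n s A T"
  shows "wf_row s A p \<in> carrier_vec n" and "nrm (wf_row s A p) > 0"
proof -
  obtain l j where p: "p = (l, j)" and l: "l \<in> S" and nz: "wf_row s A p \<noteq> 0\<^sub>v n"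
    using assms unfolding wf_idx_def by auto
  show v: "wf_row s A p \<in> carrier_vec n" using wf_row_carrier[OF l] p by simp
  show "nrm (wf_row s A p) > 0"
    using norm v nz unfolding is_norm_on_def by (simp add: less_le)
qed

definition bucket_list :: "'a set \<Rightarrow> real vec list" where
  "bucket_list T = (SOME xs. distinct xs \<and> set xs = wf_buckets n nrm s A T)"

lemma
  assumes "T \<subseteq> S"
  shows distinct_bucket_list: "distinct (bucket_list T)"
    and set_bucket_list: "set (bucket_list T) = wf_buckets n nrm s A T"
proof -
  have "finite (wf_buckets n nrm s A T)"
    unfolding wf_buckets_def using finite_wf_idx[OF assms] by simp
  then have "\<exists>xs. distinct xs \<and> set xs = wf_buckets n nrm s A T"
    using finite_distinct_list by blast
  then have "distinct (bucket_list T) \<and> set (bucket_list T) = wf_buckets n nrm s A T"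
    unfolding bucket_list_def by (rule someI_ex)
  then show "distinct (bucket_list T)" and "set (bucket_list T) = wf_buckets n nrm s A T" by auto
qed

lemma wf_buckets_carrier: "T \<subseteq> S \<Longrightarrow> e \<in> wf_buckets n nrm s A T \<Longrightarrow> e \<in> carrier_vec n"
  unfolding wf_buckets_def using wf_idx_row(1) unit_dir_carrier by blast

lemma wf_weight_pos:
  assumes T: "T \<subseteq> S" and e: "e \<in> wf_buckets n nrm s A T"
  shows "wf_weight n nrm s A T e > 0"
proof -
  obtain p where p: "p \<in> wf_idx n s A T" "unit_dir nrm (wf_row s A p) = e"
    using e unfolding wf_buckets_def by auto
  show ?thesis unfolding wf_weight_def
    by (rule sum_pos2[of _ p]) (use p finite_wf_idx[OF T] wf_idx_row[OF T] in \<open>auto simp: less_imp_le\<close>)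
qed

lemma wf_weight_mono:
  assumes "T \<subseteq> T'" and "T' \<subseteq> S"
  shows "wf_weight n nrm s A T e \<le> wf_weight n nrm s A T' e"
  unfolding wf_weight_def
  by (rule sum_mono2)
    (use finite_wf_idx[OF assms(2)] wf_idx_mono[OF assms(1)] wf_idx_row[OF assms(2)] in
      \<open>auto simp: less_imp_le\<close>)

lemma wf_strategy_carrier:
  "wf_strategy n nrm s A T \<in> carrier_mat (length (bucket_list T)) n"
  unfolding wf_strategy_def bucket_list_def[symmetric] by (simp add: mat_of_rows_def)

lemma row_wf_strategy:
  assumes "T \<subseteq> S" and "k < length (bucket_list T)"
  shows "row (wf_strategy n nrm s A T) k = wf_weight n nrm s A T (bucket_list T ! k) \<cdot>\<^sub>v bucket_list T ! k"
proof -
  have "bucket_list T ! k \<in> carrier_vec n"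
    using wf_buckets_carrier[OF assms(1)] set_bucket_list[OF assms(1)] nth_mem[OF assms(2)] by blast
  then show ?thesis
    unfolding wf_strategy_def bucket_list_def[symmetric] using assms(2) by simp
qed

lemma wf_weight_mult_abs:
  assumes T: "T \<subseteq> S" and c: "c < n"
  shows "wf_weight n nrm s A T e * \<bar>e $ c\<bar> =
    (\<Sum>p \<in> {p \<in> wf_idx n s A T. unit_dir nrm (wf_row s A p) = e}. \<bar>wf_row s A p $ c\<bar>)"
  unfolding wf_weight_def sum_distrib_right
proof (rule sum.cong)
  fix p assume "p \<in> {p \<in> wf_idx n s A T. unit_dir nrm (wf_row s A p) = e}"
  then have p: "p \<in> wf_idx n s A T" and e: "e = unit_dir nrm (wf_row s A p)" by auto
  have "wf_row s A p $ c = nrm (wf_row s A p) * e $ c"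
    using wf_idx_row[OF T p] c smult_unit_dir[of nrm "wf_row s A p"]
    by (metis carrier_vecD e index_smult_vec(1) less_irrefl unit_dir_carrier)
  then show "nrm (wf_row s A p) * \<bar>e $ c\<bar> = \<bar>wf_row s A p $ c\<bar>"
    using wf_idx_row(2)[OF T p] by (simp add: abs_mult)
qed simp

lemma sum_abs_wf_idx:
  assumes T: "T \<subseteq> S" and c: "c < n"
  shows "(\<Sum>p \<in> wf_idx n s A T. \<bar>wf_row s A p $ c\<bar>) = (\<Sum>l\<in>T. s l * col_l1 (A l) c)"
proof -
  have fin: "finite (Sigma T (\<lambda>l. {..<dim_row (A l)}))"
    using finite_subset[OF T finite_S] by blast
  have "(\<Sum>p \<in> wf_idx n s A T. \<bar>wf_row s A p $ c\<bar>) =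
      (\<Sum>p \<in> Sigma T (\<lambda>l. {..<dim_row (A l)}). \<bar>wf_row s A p $ c\<bar>)"
    using c by (intro sum.mono_neutral_left[OF fin wf_idx_subset]) (auto simp: wf_idx_def)
  also have "\<dots> = (\<Sum>l\<in>T. \<Sum>j<dim_row (A l). \<bar>wf_row s A (l, j) $ c\<bar>)"
    using sum.Sigma[of T "\<lambda>l. {..<dim_row (A l)}" "\<lambda>l j. \<bar>wf_row s A (l, j) $ c\<bar>"]
      finite_subset[OF T finite_S]
    by (simp add: case_prod_beta')
  also have "\<dots> = (\<Sum>l\<in>T. \<Sum>j<dim_row (A l). \<bar>s l * A l $$ (j, c)\<bar>)"
    using T c wf_row_index by (intro sum.cong refl) auto
  also have "\<dots> = (\<Sum>l\<in>T. s l * col_l1 (A l) c)"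
    unfolding col_l1_def using T s_pos
    by (intro sum.cong refl) (auto simp: abs_mult sum_distrib_left less_imp_le)
  finally show ?thesis .
qed

text \<open>Bucketing preserves the column \<open>L\<^sub>1\<close> mass: every row of every \<open>s\<^sub>l A\<^sub>l\<close> ends up, rescaled
  by its norm, in exactly one bucket.\<close>
lemma col_l1_wf_strategy:
  assumes T: "T \<subseteq> S" and c: "c < n"
  shows "col_l1 (wf_strategy n nrm s A T) c = (\<Sum>l\<in>T. s l * col_l1 (A l) c)"
proof -
  let ?xs = "bucket_list T" and ?f = "wf_weight n nrm s A T"
  let ?I = "wf_idx n s A T" and ?d = "\<lambda>p. unit_dir nrm (wf_row s A p)"
  let ?M = "wf_strategy n nrm s A T"
  have M: "?M \<in> carrier_mat (length ?xs) n" by (rule wf_strategy_carrier)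
  have "col_l1 ?M c = (\<Sum>k<length ?xs. \<bar>?M $$ (k, c)\<bar>)" unfolding col_l1_def using M by simp
  also have "\<dots> = (\<Sum>k<length ?xs. ?f (?xs ! k) * \<bar>(?xs ! k) $ c\<bar>)"
  proof (rule sum.cong[OF refl])
    fix k assume "k \<in> {..<length ?xs}"
    then have k: "k < length ?xs" by simp
    have e: "?xs ! k \<in> wf_buckets n nrm s A T" using set_bucket_list[OF T] nth_mem[OF k] by simp
    have "?M $$ (k, c) = row ?M k $ c" using M k c by simp
    also have "\<dots> = ?f (?xs ! k) * (?xs ! k) $ c"
      using row_wf_strategy[OF T k] wf_buckets_carrier[OF T e] c by simp
    finally show "\<bar>?M $$ (k, c)\<bar> = ?f (?xs ! k) * \<bar>(?xs ! k) $ c\<bar>"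
      using wf_weight_pos[OF T e] by (simp add: abs_mult)
  qed
  also have "\<dots> = (\<Sum>e \<in> wf_buckets n nrm s A T. ?f e * \<bar>e $ c\<bar>)"
    using sum_nth_distinct[OF distinct_bucket_list[OF T], of "\<lambda>e. ?f e * \<bar>e $ c\<bar>"] set_bucket_list[OF T]
    by simp
  also have "\<dots> = (\<Sum>e \<in> ?d ` ?I. \<Sum>p \<in> {p \<in> ?I. ?d p = e}. \<bar>wf_row s A p $ c\<bar>)"
    unfolding wf_buckets_def using wf_weight_mult_abs[OF T c] by simp
  also have "\<dots> = (\<Sum>p \<in> ?I. \<bar>wf_row s A p $ c\<bar>)"
    by (rule sum.image_gen[symmetric]) (rule finite_wf_idx[OF T])
  finally show ?thesis unfolding sum_abs_wf_idx[OF T c] .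
qed

lemma norm1_wf_strategy:
  assumes T: "T \<subseteq> S" and n: "0 < n" and l1: "\<And>l c. l \<in> T \<Longrightarrow> c < n \<Longrightarrow> col_l1 (A l) c = 1"
  shows "norm1 (wf_strategy n nrm s A T) = (\<Sum>l\<in>T. s l)"
  using wf_strategy_carrier[of T] n T s_pos
  by (intro norm1_eq_const) (auto simp: col_l1_wf_strategy[OF T] l1 subset_iff less_imp_le sum_nonneg)

lemma wf_strategy_single_factor:
  assumes i: "i \<in> S"
  shows "\<exists>T \<in> carrier_mat (dim_row (A i)) (length (bucket_list {i})). A i = T * wf_strategy n nrm s A {i}"
proof (rule factor_through_row_multiples)
  show "A i \<in> carrier_mat (dim_row (A i)) n" by (intro carrier_matI refl dim_col_A[OF i])
  show "wf_strategy n nrm s A {i} \<in> carrier_mat (length (bucket_list {i})) n"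
    by (rule wf_strategy_carrier)
next
  fix j assume j: "j < dim_row (A i)"
  let ?v = "wf_row s A (i, j)" and ?xs = "bucket_list {i}"
  have Ti: "{i} \<subseteq> S" using i by simp
  have si: "s i > 0" using s_pos[OF i] .
  have "?v = s i \<cdot>\<^sub>v row (A i) j" unfolding wf_row_def using j by simp
  then have row_eq: "row (A i) j = (1 / s i) \<cdot>\<^sub>v ?v" using si by (simp add: smult_smult_assoc)
  show "row (A i) j = 0\<^sub>v n \<or> (\<exists>l < length ?xs. \<exists>a. row (A i) j = a \<cdot>\<^sub>v row (wf_strategy n nrm s A {i}) l)"
  proof (cases "?v = 0\<^sub>v n")
    case True
    then show ?thesis unfolding row_eq by (intro disjI1 eq_vecI) auto
  next
    case False
    then have p: "(i, j) \<in> wf_idx n s A {i}" unfolding wf_idx_def using j by simp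
    let ?e = "unit_dir nrm ?v" and ?f = "wf_weight n nrm s A {i}"
    have "?e \<in> set ?xs" using p set_bucket_list[OF Ti] unfolding wf_buckets_def by auto
    then obtain l where l: "l < length ?xs" "?xs ! l = ?e" by (auto simp: in_set_conv_nth)
    have f: "?f ?e > 0" using wf_weight_pos[OF Ti] \<open>?e \<in> set ?xs\<close> set_bucket_list[OF Ti] by auto
    have "row (A i) j = (1 / s i) \<cdot>\<^sub>v (nrm ?v \<cdot>\<^sub>v ?e)"
      unfolding row_eq using smult_unit_dir[of nrm ?v] wf_idx_row(2)[OF Ti p] by simp
    also have "\<dots> = (nrm ?v / (s i * ?f ?e)) \<cdot>\<^sub>v row (wf_strategy n nrm s A {i}) l"
      using row_wf_strategy[OF Ti l(1)] l(2) f si by (simp add: smult_smult_assoc)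
    finally show ?thesis using l(1) by (intro disjI2 exI[of _ l]) auto
  qed
qed

text \<open>The buckets of a single analyst are among the joint buckets, each with a weight that can only
  grow when more analysts join.\<close>
lemma wf_strategy_joint_factor:
  assumes i: "i \<in> S" and Z: "Z \<in> carrier_mat r (length (bucket_list {i}))"
  shows "\<exists>Y \<in> carrier_mat r (length (bucket_list S)).
    Y * wf_strategy n nrm s A S = Z * wf_strategy n nrm s A {i} \<and> frob_sq Y \<le> frob_sq Z"
proof -
  let ?xi = "bucket_list {i}" and ?xS = "bucket_list S"
  let ?fi = "wf_weight n nrm s A {i}" and ?fS = "wf_weight n nrm s A S"
  have Ti: "{i} \<subseteq> S" using i by simp
  have "set ?xi \<subseteq> set ?xS"
    unfolding set_bucket_list[OF Ti] set_bucket_list[OF order_refl] wf_buckets_def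
    by (rule image_mono[OF wf_idx_mono[OF Ti]])
  then have "\<forall>j. \<exists>l. j < length ?xi \<longrightarrow> l < length ?xS \<and> ?xS ! l = ?xi ! j"
    by (metis in_set_conv_nth nth_mem subsetD)
  then obtain \<sigma> where \<sigma>: "\<And>j. j < length ?xi \<Longrightarrow> \<sigma> j < length ?xS \<and> ?xS ! \<sigma> j = ?xi ! j"
    by metis
  have inj: "inj_on \<sigma> {..<length ?xi}"
    using \<sigma> nth_eq_iff_index_eq[OF distinct_bucket_list[OF Ti]] by (intro inj_onI) (metis lessThan_iff)
  define t where "t j = ?fi (?xi ! j) / ?fS (?xi ! j)" for j
  have weights: "0 < ?fi (?xi ! j) \<and> ?fi (?xi ! j) \<le> ?fS (?xi ! j)" if "j < length ?xi" for j
    using wf_weight_pos[OF Ti] wf_weight_mono[OF Ti order_refl] nth_mem[OF that] set_bucket_list[OF Ti]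
    by auto
  show ?thesis
  proof (rule scaled_rows_factor_frob_le[OF wf_strategy_carrier wf_strategy_carrier Z inj])
    fix j assume j: "j < length ?xi"
    show "\<sigma> j < length ?xS" using \<sigma>[OF j] ..
    show "\<bar>t j\<bar> \<le> 1" using weights[OF j] by (simp add: t_def)
    show "row (wf_strategy n nrm s A {i}) j = t j \<cdot>\<^sub>v row (wf_strategy n nrm s A S) (\<sigma> j)"
      using row_wf_strategy[OF Ti j] row_wf_strategy[OF order_refl, of "\<sigma> j"] \<sigma>[OF j] weights[OF j]
      by (simp add: t_def smult_smult_assoc)
  qed
qed

lemma frob_sq_pinv_joint_le_single:
  assumes i: "i \<in> S" and W: "W \<in> carrier_mat r n" and W_row_space: "W = W * pinv (A i) * A i"
  shows "frob_sq (W * pinv (wf_strategy n nrm s A S)) \<le> frob_sq (W * pinv (wf_strategy n nrm s A {i}))"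
proof -
  let ?A1 = "wf_strategy n nrm s A {i}" and ?AS = "wf_strategy n nrm s A S"
  have A1: "?A1 \<in> carrier_mat (length (bucket_list {i})) n" by (rule wf_strategy_carrier)
  have AS: "?AS \<in> carrier_mat (length (bucket_list S)) n" by (rule wf_strategy_carrier)
  obtain T where T: "T \<in> carrier_mat (dim_row (A i)) (length (bucket_list {i}))" and AT: "A i = T * ?A1"
    using wf_strategy_single_factor[OF i] by blast
  define Z where "Z = W * pinv ?A1"
  have Z: "Z \<in> carrier_mat r (length (bucket_list {i}))"
    unfolding Z_def using W A1 pinv_carrier[of ?A1] by simp
  have V: "W * pinv (A i) * T \<in> carrier_mat r (length (bucket_list {i}))"
    using W T pinv_carrier[of "A i"] dim_col_A[OF i] by simp
  have "W = (W * pinv (A i) * T) * ?A1"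
    using W_row_space AT assoc_mult_mat[OF _ T A1, of "W * pinv (A i)" r] W pinv_carrier[of "A i"]
      dim_col_A[OF i] by simp
  then have WZ: "W = Z * ?A1"
    unfolding Z_def using mult_pinv_mult_right[OF A1 V] by simp
  obtain Y where Y: "Y \<in> carrier_mat r (length (bucket_list S))"
    and YZ: "Y * ?AS = Z * ?A1" "frob_sq Y \<le> frob_sq Z"
    using wf_strategy_joint_factor[OF i Z] by blast
  have "frob_sq (W * pinv ?AS) = frob_sq (Y * ?AS * pinv ?AS)" using WZ YZ(1) by simp
  also have "\<dots> \<le> frob_sq Y" by (rule frob_sq_mult_pinv_le[OF AS Y])
  also have "\<dots> \<le> frob_sq Z" by (rule YZ(2))
  finally show ?thesis unfolding Z_def .
qed

lemma wf_err_eq: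
  assumes T: "T \<subseteq> S" "T \<noteq> {}" and n: "0 < n"
    and l1: "\<And>l c. l \<in> T \<Longrightarrow> c < n \<Longrightarrow> col_l1 (A l) c = 1"
  shows "wf_err n nrm \<epsilon> W s A i T = 2 / \<epsilon>\<^sup>2 * frob_sq (W i * pinv (wf_strategy n nrm s A T))"
proof -
  have pos: "(\<Sum>l\<in>T. s l) > 0"
    using s_pos T finite_subset[OF T(1) finite_S] by (intro sum_pos) auto
  have N: "norm1 (wf_strategy n nrm s A T) = (\<Sum>l\<in>T. s l)" by (rule norm1_wf_strategy[OF T(1) n l1])
  show ?thesis
    unfolding wf_err_def Let_def N using pos by (simp add: power_mult_distrib)
qed

end

theorem mainTheorem2:
  fixes n :: nat and nrm :: "real vec \<Rightarrow> real" and \<epsilon> :: real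
    and W A :: "'a \<Rightarrow> real mat" and s :: "'a \<Rightarrow> real"
    and S :: "'a set" and i :: 'a
  assumes "\<epsilon> > 0"
    and "is_norm_on n nrm"
    and "finite S" and "S \<noteq> {}" and "i \<in> S"
    and "\<And>l. l \<in> S \<Longrightarrow> s l > 0"
    and "\<And>l. l \<in> S \<Longrightarrow> dim_col (W l) = n"
    and "\<And>l. l \<in> S \<Longrightarrow> dim_col (A l) = n"
    and "\<And>l. l \<in> S \<Longrightarrow> W l = W l * pinv (A l) * A l"
    and "\<And>l j. l \<in> S \<Longrightarrow> j < n \<Longrightarrow> col_l1 (A l) j = 1"
  shows "wf_err n nrm \<epsilon> W s A i S \<le> wf_err n nrm \<epsilon> W s A i {i}"
proof (cases "n = 0")
  case True
  then have "norm1 (wf_strategy n nrm s A T) = 0" for T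
    unfolding norm1_def wf_strategy_def by simp
  then show ?thesis unfolding wf_err_def Let_def by simp
next
  case False
  interpret waterfilling n nrm s A S
    using assms by unfold_locales auto
  have "W i \<in> carrier_mat (dim_row (W i)) n" by (intro carrier_matI refl assms(7)[OF assms(5)])
  then have "frob_sq (W i * pinv (wf_strategy n nrm s A S)) \<le>
      frob_sq (W i * pinv (wf_strategy n nrm s A {i}))"
    by (rule frob_sq_pinv_joint_le_single[OF assms(5) _ assms(9)[OF assms(5)]])
  moreover have "wf_err n nrm \<epsilon> W s A i S = 2 / \<epsilon>\<^sup>2 * frob_sq (W i * pinv (wf_strategy n nrm s A S))"
    by (rule wf_err_eq) (use assms False in auto)
  moreover have "wf_err n nrm \<epsilon> W s A i {i} = 2 / \<epsilon>\<^sup>2 * frob_sq (W i * pinv (wf_strategy n nrm s A {i}))"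
    by (rule wf_err_eq) (use assms False in auto)
  ultimately show ?thesis by (simp add: divide_right_mono)
qed

end
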